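(* Let $p$ be an odd prime and let $\mathcal{S}\subset\mathbb{A}^3$ be the affine surface over $\mathbb{F}_{p^2}$ defined by $y^p-y=x^{p+1}z^2+x^2z^{p+1}$. Then the number of affine $\mathbb{F}_{p^2}$-points is $$\#\mathcal{S}(\mathbb{F}_{p^2})=p\big(2(p-1)^3+2(p-1)^2+2p^2-1\big)=2p^4-2p^3+2p^2-p.$$ *)

theory Defs
  imports "HOL-Computational_Algebra.Primes"
begin

end

theory Submission
  imports Defs "HOL-Number_Theory.Residues" "HOL-Computational_Algebra.Polynomial"
begin

text \<open>
  On a field \<open>F\<close> with \<open>p^2\<close> elements the Artin--Schreier map \<open>T y = y^p - y\<close> is additive,
  with kernel \<open>\<bbbF>\<^sub>p\<close> and image the trace-zero set \<open>{w. w^p + w = 0}\<close>: both are root sets of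
  polynomials of degree \<open>p\<close>, and \<open>|ker T| \<cdot> |T F| = p^2\<close> forces both degree bounds to be attained.
  So every \<open>w\<close> has \<open>p\<close> or \<open>0\<close> preimages, and the surface has \<open>p\<close> times as many points as the
  curve \<open>G^p + G = 0\<close>, where \<open>G = x^(p+1) z^2 + x^2 z^(p+1)\<close>. Because \<open>x^(p^2) = x\<close>, this trace
  factors as \<open>x^2 z^2 (x^(p-1) + z^(p-1)) (1 + x^(p-1) z^(p-1))\<close>. The same counting shows that
  \<open>t \<mapsto> t^(p-1)\<close> maps \<open>F - {0}\<close> onto the \<open>(p+1)\<close>-st roots of unity with fibres of size \<open>p - 1\<close>,
  which counts the zeros of the factorisation on each line \<open>x = const\<close>.
\<close>

lemma card_eq_card_image_mult_fibre:
  assumes "finite A" and "\<And>a. a \<in> A \<Longrightarrow> card {a' \<in> A. f a' = f a} = k"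
  shows "card A = card (f ` A) * k"
proof -
  have "card A = (\<Sum>b\<in>f ` A. card {a \<in> A. f a = b})"
    using sum.image_gen[OF assms(1), of "\<lambda>_. 1::nat" f] by simp
  also have "\<dots> = (\<Sum>b\<in>f ` A. k)"
    by (rule sum.cong) (use assms(2) in auto)
  finally show ?thesis by simp
qed

text \<open>\<open>|A| = |f A| \<cdot> k \<le> m \<cdot> n = |A|\<close> forces both bounds to be attained.\<close>

lemma tight_fibre_count:
  assumes "finite A" "A \<noteq> {}"
    and fibre: "\<And>a. a \<in> A \<Longrightarrow> card {a' \<in> A. f a' = f a} = k"
    and "f ` A \<subseteq> B" "finite B" "card B \<le> m" "k \<le> n" "card A = n * m"
  shows "k = n \<and> f ` A = B"
proof -
  have image_le: "card (f ` A) \<le> m"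
    using card_mono[OF \<open>finite B\<close> \<open>f ` A \<subseteq> B\<close>] \<open>card B \<le> m\<close> by linarith
  have prod_eq: "card (f ` A) * k = n * m"
    using card_eq_card_image_mult_fibre[OF \<open>finite A\<close> fibre] \<open>card A = n * m\<close> by simp
  have "0 < m" "0 < n"
    using \<open>card A = n * m\<close> \<open>finite A\<close> \<open>A \<noteq> {}\<close> by (auto simp: card_gt_0_iff)
  have "k = n"
  proof (rule ccontr)
    assume "k \<noteq> n"
    have "card (f ` A) * k \<le> m * k"
      using image_le by simp
    also have "\<dots> < m * n"
      using \<open>k \<noteq> n\<close> \<open>k \<le> n\<close> \<open>0 < m\<close> by simp
    finally show False
      using prod_eq by (simp add: mult.commute)
  qed
  with prod_eq \<open>0 < n\<close> have "card (f ` A) = m" by simp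
  with \<open>card B \<le> m\<close> have "f ` A = B"
    using card_seteq[OF \<open>finite B\<close> \<open>f ` A \<subseteq> B\<close>] by simp
  with \<open>k = n\<close> show ?thesis ..
qed

lemma card_roots_power_plus_linear_le:
  assumes "2 \<le> n"
  shows "card {x::'a::field. x ^ n + c * x = d} \<le> n"
proof -
  define q where "q = monom (1::'a) n + [:- d, c:]"
  have poly_q: "poly q x = 0 \<longleftrightarrow> x ^ n + c * x = d" for x
    by (simp add: q_def poly_monom algebra_simps)
  have "coeff q n = 1"
    using assms by (simp add: q_def coeff_monom coeff_pCons split: nat.split)
  then have "q \<noteq> 0" by auto
  have "degree q \<le> n"
    unfolding q_def
    by (rule degree_add_le) (use assms in \<open>auto simp: degree_monom_le\<close>)
  then show ?thesis
    using card_poly_roots_bound[OF \<open>q \<noteq> 0\<close>] poly_q by simp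
qed

lemma card_additive_fibre:
  fixes f :: "'a::ab_group_add \<Rightarrow> 'b::ab_group_add"
  assumes add: "\<And>a b. f (a + b) = f a + f b"
  shows "card {a. f a = f y} = card {a. f a = 0}"
proof -
  have diff: "f (a - y) = f a - f y" for a
    using add[of "a - y" y] by (simp add: algebra_simps)
  have "{a. f a = f y} = (+) y ` {a. f a = 0}"
  proof (intro Set.set_eqI iffI)
    fix a assume "a \<in> {a. f a = f y}"
    then have "a = y + (a - y)" "a - y \<in> {a. f a = 0}"
      using diff[of a] by simp_all
    then show "a \<in> (+) y ` {a. f a = 0}" by blast
  qed (auto simp: add)
  then show ?thesis
    by (simp add: card_image)
qed

lemma card_power_fibre:
  fixes t :: "'a::field"
  assumes "t \<noteq> 0"
  shows "card {a. a \<noteq> 0 \<and> a ^ n = t ^ n} = card {a::'a. a \<noteq> 0 \<and> a ^ n = 1}"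
proof -
  have "{a. a \<noteq> 0 \<and> a ^ n = t ^ n} = (\<lambda>k. k * t) ` {a. a \<noteq> 0 \<and> a ^ n = 1}"
  proof (intro Set.set_eqI iffI)
    fix a assume "a \<in> {a. a \<noteq> 0 \<and> a ^ n = t ^ n}"
    then have "a = a / t * t" "a / t \<in> {a. a \<noteq> 0 \<and> a ^ n = 1}"
      using assms by (simp_all add: power_divide)
    then show "a \<in> (\<lambda>k. k * t) ` {a. a \<noteq> 0 \<and> a ^ n = 1}" by blast
  qed (auto simp: power_mult_distrib assms)
  moreover have "inj (\<lambda>k. k * t)"
    using assms by (simp add: inj_on_def)
  ultimately show ?thesis
    by (simp add: card_image inj_on_subset)
qed

lemma power_card_minus_one_eq_one:
  fixes x :: "'a::{field,finite}"
  assumes "x \<noteq> 0"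
  shows "x ^ (card (UNIV :: 'a set) - 1) = 1"
proof -
  let ?U = "UNIV - {0::'a}"
  have "bij_betw ((*) x) ?U ?U"
    by (rule bij_betwI[of _ _ _ "\<lambda>y. y / x"]) (use assms in auto)
  then have "(\<Prod>y\<in>?U. x * y) = \<Prod>?U"
    by (rule prod.reindex_bij_betw)
  moreover have "(\<Prod>y\<in>?U. x * y) = x ^ card ?U * \<Prod>?U"
    by (simp add: prod.distrib)
  moreover have "\<Prod>?U \<noteq> 0" and "card ?U = card (UNIV :: 'a set) - 1"
    by (simp_all add: card_Diff_subset)
  ultimately show ?thesis by simp
qed

lemma power_card_eq_self:
  fixes x :: "'a::{field,finite}"
  shows "x ^ card (UNIV :: 'a set) = x"
proof -
  have "0 < card (UNIV :: 'a set)"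
    using finite_UNIV_card_ge_0[where 'a = 'a] by simp
  then have "x ^ card (UNIV :: 'a set) = x * x ^ (card (UNIV :: 'a set) - 1)"
    by (metis Suc_diff_1 power_Suc)
  with power_card_minus_one_eq_one[of x] show ?thesis
    by (cases "x = 0") simp_all
qed

lemma CHAR_eq_if_card_prime_power:
  assumes "prime p" "card (UNIV :: 'a::{field,finite} set) = p ^ k"
  shows "CHAR('a) = p"
proof -
  have "prime CHAR('a)"
    by (rule prime_CHAR_semidom, rule finite_imp_CHAR_pos) simp
  moreover have "CHAR('a) dvd p ^ k"
    using CHAR_dvd_CARD[where 'a='a] assms(2) by simp
  ultimately have "CHAR('a) dvd p"
    using prime_dvd_power by blast
  with \<open>prime CHAR('a)\<close> \<open>prime p\<close> show ?thesis
    by (simp add: primes_dvd_imp_eq)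
qed

context
  fixes p :: nat
  assumes prime_p: "prime p" and odd_p: "odd p"
    and card_field: "card (UNIV :: ('a::{field,finite}) set) = p ^ 2"
begin

lemma p_ge_3: "3 \<le> p"
  using prime_ge_2_nat[OF prime_p] odd_p by (cases "p = 2") auto

lemma p_squared_minus_one: "(p - 1) * (p + 1) = p ^ 2 - 1"
  using p_ge_3 by (simp add: power2_eq_square algebra_simps)

lemma frobenius_add: "((x::'a) + y) ^ p = x ^ p + y ^ p"
  by (rule freshmans_dream)
     (simp_all add: CHAR_eq_if_card_prime_power[OF prime_p card_field] prime_p)

lemma frobenius_diff: "((x::'a) - y) ^ p = x ^ p - y ^ p"
  using frobenius_add[of "x - y" y] by simp

lemma frobenius_frobenius: "((x::'a) ^ p) ^ p = x"
  using power_card_eq_self[of x] by (simp add: card_field power2_eq_square power_mult)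

lemma one_neq_minus_one: "(1::'a) \<noteq> - 1"
proof
  assume "(1::'a) = - 1"
  then have "(of_nat 2 :: 'a) = 0"
    by (simp add: eq_neg_iff_add_eq_0)
  then have "p dvd 2"
    using of_nat_eq_0_iff_char_dvd[of 2, where 'a='a]
    by (simp add: CHAR_eq_if_card_prime_power[OF prime_p card_field])
  with p_ge_3 show False
    using dvd_imp_le[of p 2] by simp
qed

lemma artin_schreier_kernel_and_image:
  "card {y::'a. y ^ p - y = 0} = p \<and> range (\<lambda>y::'a. y ^ p - y) = {w. w ^ p + w = 0}"
proof -
  let ?T = "\<lambda>y::'a. y ^ p - y"
  have additive: "?T (a + b) = ?T a + ?T b" for a b
    by (simp add: frobenius_add)
  have fibre: "card {a \<in> UNIV. ?T a = ?T y} = card {a. ?T a = 0}" for y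
    using card_additive_fibre[of ?T y, OF additive] by simp
  have image: "range ?T \<subseteq> {w. w ^ p + w = 0}"
    by (auto simp: frobenius_diff frobenius_frobenius)
  have kernel_le: "card {a. ?T a = 0} \<le> p"
    using card_roots_power_plus_linear_le[of p "- 1" 0] p_ge_3 by simp
  have image_le: "card {w::'a. w ^ p + w = 0} \<le> p"
    using card_roots_power_plus_linear_le[of p 1 0] p_ge_3 by simp
  show ?thesis
    by (rule tight_fibre_count[OF finite_UNIV UNIV_not_empty fibre image finite image_le kernel_le])
       (simp add: card_field power2_eq_square)
qed

lemma card_artin_schreier_fibre:
  "card {y::'a. y ^ p - y = w} = (if w ^ p + w = 0 then p else 0)"
proof (cases "w ^ p + w = 0")
  case True
  then obtain y0 where "w = y0 ^ p - y0"
    using artin_schreier_kernel_and_image by (metis (mono_tags, lifting) imageE mem_Collect_eq)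
  then show ?thesis
    using card_additive_fibre[of "\<lambda>y::'a. y ^ p - y" y0] artin_schreier_kernel_and_image True
    by (simp add: frobenius_add)
next
  case False
  then have "{y::'a. y ^ p - y = w} = {}"
    using artin_schreier_kernel_and_image by blast
  with False show ?thesis by simp
qed

lemma unit_power_kernel_and_image:
  "card {t::'a. t \<noteq> 0 \<and> t ^ (p - 1) = 1} = p - 1
   \<and> (\<lambda>t. t ^ (p - 1)) ` (UNIV - {0}) = {c::'a. c ^ (p + 1) = 1}"
proof -
  let ?A = "UNIV - {0::'a}" and ?f = "\<lambda>t::'a. t ^ (p - 1)"
  have fibre: "card {a \<in> ?A. ?f a = ?f t} = card {a. a \<noteq> 0 \<and> ?f a = 1}" if "t \<in> ?A" for t
    using card_power_fibre[of t "p - 1"] that by simp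
  have "(t ^ (p - 1)) ^ (p + 1) = 1" if "t \<noteq> 0" for t :: 'a
    unfolding power_mult[symmetric] p_squared_minus_one card_field[symmetric]
    using power_card_minus_one_eq_one[OF that] .
  then have image: "?f ` ?A \<subseteq> {c. c ^ (p + 1) = 1}"
    by auto
  have "card {a::'a. a \<noteq> 0 \<and> ?f a = 1} \<le> card {a::'a. a ^ (p - 1) + 0 * a = 1}"
    by (rule card_mono) auto
  also have "\<dots> \<le> p - 1"
    by (rule card_roots_power_plus_linear_le) (use p_ge_3 in simp)
  finally have kernel_le: "card {a::'a. a \<noteq> 0 \<and> ?f a = 1} \<le> p - 1" .
  have image_le: "card {c::'a. c ^ (p + 1) = 1} \<le> p + 1"
    using card_roots_power_plus_linear_le[of "p + 1" 0 1] p_ge_3 by simp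
  have "?A \<noteq> {}"
    by (metis Diff_iff empty_iff one_neq_zero singletonD UNIV_I)
  show ?thesis
    by (rule tight_fibre_count[OF _ \<open>?A \<noteq> {}\<close> fibre image finite image_le kernel_le])
       (use p_squared_minus_one in \<open>simp_all add: card_Diff_subset card_field\<close>)
qed

lemma card_unit_power_fibre:
  assumes "c ^ (p + 1) = 1"
  shows "card {t::'a. t \<noteq> 0 \<and> t ^ (p - 1) = c} = p - 1"
proof -
  obtain t0 where "t0 \<noteq> 0" "c = t0 ^ (p - 1)"
    using unit_power_kernel_and_image assms by (metis (mono_tags, lifting) DiffE imageE insertI1 mem_Collect_eq)
  then show ?thesis
    using card_power_fibre[of t0 "p - 1"] unit_power_kernel_and_image by simp
qed

lemma frobenius_trace_surface_equation:
  fixes x z :: 'a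
  defines "F \<equiv> x ^ (p + 1) * z ^ 2 + x ^ 2 * z ^ (p + 1)"
  shows "F ^ p + F = x ^ 2 * z ^ 2 * (x ^ (p - 1) + z ^ (p - 1)) * (1 + x ^ (p - 1) * z ^ (p - 1))"
proof -
  have power_p: "y ^ p = y * y ^ (p - 1)" for y :: 'a
    using p_ge_3 by (cases p) auto
  have power_succ_p: "(y ^ (p + 1)) ^ p = y * y ^ p" for y :: 'a
    by (simp add: power_mult_distrib frobenius_frobenius)
  have square_p: "(y ^ 2) ^ p = (y ^ p) ^ 2" for y :: 'a
    by (simp add: power_mult[symmetric] mult.commute)
  have "F ^ p = (x ^ (p + 1)) ^ p * (z ^ 2) ^ p + (x ^ 2) ^ p * (z ^ (p + 1)) ^ p"
    unfolding F_def by (simp only: frobenius_add power_mult_distrib)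
  also have "\<dots> = x * x ^ p * (z ^ p) ^ 2 + (x ^ p) ^ 2 * (z * z ^ p)"
    unfolding power_succ_p square_p ..
  finally have "F ^ p = x * x ^ p * (z ^ p) ^ 2 + (x ^ p) ^ 2 * (z * z ^ p)" .
  then show ?thesis
    unfolding F_def power_add power_p[of x] power_p[of z]
    by (simp add: algebra_simps power2_eq_square)
qed

lemma card_surface_eq:
  "card {(x, y, z). (y::'a) ^ p - y = x ^ (p + 1) * z ^ 2 + x ^ 2 * z ^ (p + 1)}
   = p * card {(x, z). (x::'a) ^ 2 * z ^ 2 * (x ^ (p - 1) + z ^ (p - 1)) * (1 + x ^ (p - 1) * z ^ (p - 1)) = 0}"
  (is "card ?S = p * card {(x, z). ?H x z = 0}")
proof -
  let ?F = "\<lambda>x z::'a. x ^ (p + 1) * z ^ 2 + x ^ 2 * z ^ (p + 1)"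
  have "?S = (\<lambda>((x, z), y). (x, y, z)) ` (SIGMA (x, z):UNIV. {y. y ^ p - y = ?F x z})"
    by (auto simp: image_iff)
  then have "card ?S = (\<Sum>(x, z)\<in>UNIV. card {y::'a. y ^ p - y = ?F x z})"
    by (simp add: card_image inj_on_def case_prod_beta)
  also have "\<dots> = (\<Sum>(x, z)\<in>UNIV. if ?H x z = 0 then p else 0)"
    by (intro sum.cong refl)
       (simp only: case_prod_beta card_artin_schreier_fibre frobenius_trace_surface_equation)
  also have "\<dots> = p * card {(x, z). ?H x z = 0}"
    by (simp add: sum.If_cases split_def Int_def)
  finally show ?thesis .
qed

lemma card_zero_locus_slice:
  assumes "(x::'a) \<noteq> 0"
  shows "card {z::'a. x ^ 2 * z ^ 2 * (x ^ (p - 1) + z ^ (p - 1)) * (1 + x ^ (p - 1) * z ^ (p - 1)) = 0}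
         = (if x ^ (p - 1) * x ^ (p - 1) = 1 then p else 2 * p - 1)"
proof -
  \<comment> \<open>The nonzero roots satisfy \<open>z^(p-1) = -a\<close> or \<open>z^(p-1) = -1/a\<close>; these coincide iff \<open>a^2 = 1\<close>.\<close>
  define a where "a = x ^ (p - 1)"
  have "a \<noteq> 0"
    using assms by (simp add: a_def)
  have "a ^ (p + 1) = 1"
    using unit_power_kernel_and_image assms by (auto simp: a_def)
  define B1 where "B1 = {z::'a. z \<noteq> 0 \<and> z ^ (p - 1) = - a}"
  define B2 where "B2 = {z::'a. z \<noteq> 0 \<and> z ^ (p - 1) = - 1 / a}"
  have card_B1: "card B1 = p - 1"
    unfolding B1_def
    by (rule card_unit_power_fibre) (use \<open>a ^ (p + 1) = 1\<close> odd_p in \<open>simp add: power_minus'\<close>)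
  have card_B2: "card B2 = p - 1"
    unfolding B2_def
    by (rule card_unit_power_fibre)
       (use \<open>a ^ (p + 1) = 1\<close> odd_p in \<open>simp add: power_minus' power_divide\<close>)
  have "1 + a * w = 0 \<longleftrightarrow> w = - 1 / a" for w
    using \<open>a \<noteq> 0\<close> by (auto simp: field_simps add_eq_0_iff2 minus_equation_iff)
  then have factor_zero:
    "x ^ 2 * z ^ 2 * (a + w) * (1 + a * w) = 0 \<longleftrightarrow> z = 0 \<or> w = - a \<or> w = - 1 / a" for z w
    using assms by (simp add: add_eq_0_iff)
  have "0 < p - 1"
    using p_ge_3 by simp
  then have zeros: "{z::'a. x ^ 2 * z ^ 2 * (x ^ (p - 1) + z ^ (p - 1)) * (1 + x ^ (p - 1) * z ^ (p - 1)) = 0}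
                    = insert 0 (B1 \<union> B2)"
    unfolding a_def[symmetric] factor_zero by (auto simp: B1_def B2_def)
  have "0 \<notin> B1 \<union> B2"
    by (simp add: B1_def B2_def)
  then have card_zeros: "card (insert 0 (B1 \<union> B2)) = Suc (card (B1 \<union> B2))"
    by simp
  show ?thesis
  proof (cases "a * a = 1")
    case True
    then have "- 1 / a = - a"
      using \<open>a \<noteq> 0\<close> by (simp add: divide_eq_eq)
    then have "B2 = B1"
      by (simp only: B1_def B2_def)
    then show ?thesis
      using zeros card_zeros card_B1 True p_ge_3 by (simp add: a_def)
  next
    case False
    then have "- 1 / a \<noteq> - a"
      using \<open>a \<noteq> 0\<close> by (simp add: divide_eq_eq)
    then have "B1 \<inter> B2 = {}"
      by (auto simp: B1_def B2_def)
    then show ?thesis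
      using zeros card_zeros card_B1 card_B2 False p_ge_3
      by (simp add: a_def card_Un_disjoint B1_def B2_def)
  qed
qed

lemma card_units_with_square_one_power:
  "card {x::'a. x \<noteq> 0 \<and> x ^ (p - 1) * x ^ (p - 1) = 1} = 2 * (p - 1)"
proof -
  have "{x::'a. x \<noteq> 0 \<and> x ^ (p - 1) * x ^ (p - 1) = 1}
        = {x. x \<noteq> 0 \<and> x ^ (p - 1) = 1} \<union> {x. x \<noteq> 0 \<and> x ^ (p - 1) = - 1}"
    by (auto simp: square_eq_1_iff)
  also have "card \<dots> = card {x::'a. x \<noteq> 0 \<and> x ^ (p - 1) = 1} + card {x::'a. x \<noteq> 0 \<and> x ^ (p - 1) = - 1}"
    by (rule card_Un_disjoint) (use one_neq_minus_one in auto)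
  also have "\<dots> = 2 * (p - 1)"
    using card_unit_power_fibre[of 1] card_unit_power_fibre[of "- 1"] odd_p by simp
  finally show ?thesis .
qed

lemma card_zero_locus:
  "card {(x, z). (x::'a) ^ 2 * z ^ 2 * (x ^ (p - 1) + z ^ (p - 1)) * (1 + x ^ (p - 1) * z ^ (p - 1)) = 0}
   = 2 * (p - 1) ^ 3 + 2 * (p - 1) ^ 2 + 2 * p ^ 2 - 1"
  (is "card ?Z = _")
proof -
  let ?G = "\<lambda>x::'a. {z::'a. x ^ 2 * z ^ 2 * (x ^ (p - 1) + z ^ (p - 1)) * (1 + x ^ (p - 1) * z ^ (p - 1)) = 0}"
  let ?P = "{x::'a. x ^ (p - 1) * x ^ (p - 1) = 1}"
  let ?U = "UNIV - {0::'a}"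
  define e r where "e = card (?U \<inter> ?P)" and "r = card (?U \<inter> - ?P)"
  have "?Z = (SIGMA x:UNIV. ?G x)"
    by auto
  then have "card ?Z = (\<Sum>x\<in>UNIV. card (?G x))"
    by simp
  also have "\<dots> = card (?G 0) + (\<Sum>x\<in>?U. card (?G x))"
    by (rule sum.remove) simp_all
  also have "(\<Sum>x\<in>?U. card (?G x)) = (\<Sum>x\<in>?U. if x ^ (p - 1) * x ^ (p - 1) = 1 then p else 2 * p - 1)"
    by (rule sum.cong[OF refl], rule card_zero_locus_slice) simp
  also have "\<dots> = e * p + r * (2 * p - 1)"
    by (simp add: sum.If_cases e_def r_def)
  also have "?G 0 = UNIV"
    using p_ge_3 by simp
  finally have count: "card ?Z = p ^ 2 + e * p + r * (2 * p - 1)"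
    using card_field by simp
  obtain q where p: "p = Suc q"
    using p_ge_3 by (cases p) auto
  have "?U \<inter> ?P = {x. x \<noteq> 0 \<and> x ^ (p - 1) * x ^ (p - 1) = 1}"
    by auto
  then have e: "e = 2 * q"
    using card_units_with_square_one_power p by (simp add: e_def)
  have "e + r = card ?U"
    using card_Int_Diff[of ?U ?P] by (simp only: e_def r_def Diff_eq[of ?U ?P] finite)
  also have "\<dots> = p ^ 2 - 1"
    by (simp add: card_Diff_subset card_field)
  finally have "e + r = p ^ 2 - 1" .
  with e have "r = q ^ 2"
    using p by (simp add: power2_eq_square)
  with e have "p ^ 2 + e * p + r * (2 * p - 1) = 2 * (p - 1) ^ 3 + 2 * (p - 1) ^ 2 + 2 * p ^ 2 - 1"
    unfolding p by (simp add: power2_eq_square power3_eq_cube algebra_simps)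
  with count show ?thesis
    by simp
qed

end

theorem proposition4p3:
  fixes p :: nat
  assumes "prime p" and "odd p"
    and "card (UNIV :: ('a::{field,finite}) set) = p ^ 2"
  shows "card {(x, y, z). (y::'a) ^ p - y = x ^ (p + 1) * z ^ 2 + x ^ 2 * z ^ (p + 1)}
         = p * (2 * (p - 1) ^ 3 + 2 * (p - 1) ^ 2 + 2 * p ^ 2 - 1)"
  using card_surface_eq[OF assms] card_zero_locus[OF assms] by simp

end
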